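(* Let $G$ be a $(k+1)$-critical hypergraph with $k\ge3$. If there exist a vertex $v\in V(G)$ and an edge $e\in E(G)$ such that $v$ is a separating vertex of $G-e$ (regardless of whether $v\in e$), then $G$ is a Hajós join of two hypergraphs.
   Context: A hypergraph is a pair $G=(V,E)$ of finite sets with $E\subseteq 2^V$ and $|e|\ge2$ for all $e\in E$ (no multiple edges). A coloring requires every edge to contain two vertices of different colors; $\chi$ is the chromatic number. $G$ is $(k+1)$-critical if $\chi(G)=k+1$ but $\chi(H)\le k$ for every proper subhypergraph $H$. $G-e$ is obtained by deleting the edge $e$. A vertex $v$ is a separating vertex of a hypergraph $H$ if $H$ is the union of two induced subhypergraphs $H_1,H_2$ with $V(H_1)\cap V(H_2)=\{v\}$ and $|V(H_i)|\ge2$. Hajós join: for vertex-disjoint $G_1,G_2$, $e_i\in E(G_i)$, $v_i\in e_i$, delete $e_1,e_2$, identify $v_1,v_2$ into a new vertex $v^*$, and add a new edge $e^*$ equal to $(e_1\cup e_2)\setminus\{v_1,v_2\}$ or to $((e_1\cup e_2)\setminus\{v_1,v_2\})\cup\{v^*\}$. *)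

theory Defs
  imports Main
begin

definition hypergraph :: "'a set \<Rightarrow> 'a set set \<Rightarrow> bool" where
  "hypergraph V E \<longleftrightarrow> finite V \<and> E \<subseteq> Pow V \<and> (\<forall>e\<in>E. 2 \<le> card e)"

definition colorable :: "'a set \<Rightarrow> 'a set set \<Rightarrow> nat \<Rightarrow> bool" where
  "colorable V E k \<longleftrightarrow> (\<exists>f :: 'a \<Rightarrow> nat. f ` V \<subseteq> {..<k} \<and>
       (\<forall>e\<in>E. \<exists>x\<in>e. \<exists>y\<in>e. f x \<noteq> f y))"

definition chromatic_number :: "'a set \<Rightarrow> 'a set set \<Rightarrow> nat" where
  "chromatic_number V E = (LEAST k. colorable V E k)"

definition proper_subhypergraph :: "'a set \<Rightarrow> 'a set set \<Rightarrow> 'a set \<Rightarrow> 'a set set \<Rightarrow> bool" where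
  "proper_subhypergraph V' E' V E \<longleftrightarrow> hypergraph V' E' \<and> V' \<subseteq> V \<and> E' \<subseteq> E \<and> (V', E') \<noteq> (V, E)"

definition critical :: "nat \<Rightarrow> 'a set \<Rightarrow> 'a set set \<Rightarrow> bool" where
  "critical m V E \<longleftrightarrow> hypergraph V E \<and> chromatic_number V E = m \<and>
     (\<forall>V' E'. proper_subhypergraph V' E' V E \<longrightarrow> chromatic_number V' E' < m)"

definition induced_edges :: "'a set set \<Rightarrow> 'a set \<Rightarrow> 'a set set" where
  "induced_edges E W = {e \<in> E. e \<subseteq> W}"

definition separating_vertex :: "'a set \<Rightarrow> 'a set set \<Rightarrow> 'a \<Rightarrow> bool" where
  "separating_vertex V E v \<longleftrightarrow> (\<exists>V1 V2. V1 \<subseteq> V \<and> V2 \<subseteq> V \<and> V1 \<union> V2 = V \<and>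
      V1 \<inter> V2 = {v} \<and> 2 \<le> card V1 \<and> 2 \<le> card V2 \<and>
      E = induced_edges E V1 \<union> induced_edges E V2)"

text \<open>Hajos join of G1=(V1,E1) and G2=(V2,E2), represented with the identified vertex
  already shared: V1 \<inter> V2 = {w}, where w plays the role of v1 = v2 = v*.
  Then (e1 \<union> e2) - {v1,v2} becomes (e1 \<union> e2) - {w}.\<close>
definition hajos_join_of ::
  "'a set \<Rightarrow> 'a set set \<Rightarrow> 'a set \<Rightarrow> 'a set set \<Rightarrow> 'a set \<Rightarrow> 'a set set \<Rightarrow> bool" where
  "hajos_join_of V1 E1 V2 E2 V E \<longleftrightarrow> hypergraph V1 E1 \<and> hypergraph V2 E2 \<and>
     (\<exists>w e1 e2 estar. V1 \<inter> V2 = {w} \<and> e1 \<in> E1 \<and> e2 \<in> E2 \<and> w \<in> e1 \<and> w \<in> e2 \<and>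
        (estar = (e1 \<union> e2) - {w} \<or> estar = e1 \<union> e2) \<and>
        V = V1 \<union> V2 \<and> E = (E1 - {e1}) \<union> (E2 - {e2}) \<union> {estar})"

definition is_hajos_join :: "'a set \<Rightarrow> 'a set set \<Rightarrow> bool" where
  "is_hajos_join V E \<longleftrightarrow> (\<exists>V1 E1 V2 E2. hajos_join_of V1 E1 V2 E2 V E)"

end

theory Submission
  imports Defs "HOL-Combinatorics.Transposition"
begin

text \<open>Let \<open>W\<^sub>1, W\<^sub>2\<close> split \<open>G - e\<close> at \<open>v\<close>, and let \<open>G\<^sub>i\<close> be the hypergraph on \<open>W\<^sub>i\<close> with the
  edges of \<open>G - e\<close> inside \<open>W\<^sub>i\<close> together with \<open>e\<^sub>i = (e \<inter> W\<^sub>i) \<union> {v}\<close>. Joining \<open>G\<^sub>1\<close> and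
  \<open>G\<^sub>2\<close> at \<open>v\<close> trades \<open>e\<^sub>1, e\<^sub>2\<close> for \<open>e\<close>, so \<open>G\<close> is their Hajos join as soon as each \<open>e\<^sub>i\<close>
  has two vertices and is not already an edge. The first holds because \<open>e\<close> meets both
  \<open>W\<^sub>i - {v}\<close>: otherwise \<open>v\<close> would separate \<open>G\<close> itself, and \<open>k\<close>-colourings of the two sides,
  matched at \<open>v\<close> by a colour transposition, would colour \<open>G\<close>. For the second, a
  \<open>k\<close>-colouring of \<open>G - e\<close> makes \<open>e\<close> monochromatic, say of colour \<open>a\<close>; if \<open>v\<close> had another
  colour, exchanging \<open>a\<close> with a third colour (this needs \<open>k \<ge> 3\<close>) on the \<open>W\<^sub>2\<close> side would
  colour \<open>G\<close>. Hence \<open>e \<union> {v}\<close> is monochromatic, and neither \<open>e\<^sub>i\<close> is an edge of \<open>G - e\<close>.\<close>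

definition proper_coloring :: "'a set set \<Rightarrow> ('a \<Rightarrow> nat) \<Rightarrow> bool" where
  "proper_coloring E f \<longleftrightarrow> (\<forall>e\<in>E. \<exists>x\<in>e. \<exists>y\<in>e. f x \<noteq> f y)"

lemma colorable_iff_proper_coloring:
  "colorable V E k \<longleftrightarrow> (\<exists>f. f ` V \<subseteq> {..<k} \<and> proper_coloring E f)"
  by (simp add: colorable_def proper_coloring_def)

lemma proper_coloring_not_monochromatic:
  assumes "proper_coloring E f" "\<forall>x\<in>S. f x = a"
  shows "S \<notin> E"
  using assms by (auto simp: proper_coloring_def)

lemma proper_coloring_comp_inj:
  assumes "inj g" "proper_coloring E f"
  shows "proper_coloring E (g \<circ> f)"
  using assms by (auto simp: proper_coloring_def inj_eq)

lemma proper_coloring_glue: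
  assumes "proper_coloring A f\<^sub>1" "\<forall>e\<in>A. e \<subseteq> V\<^sub>1"
    and "proper_coloring B f\<^sub>2" "\<forall>e\<in>B. e \<subseteq> V\<^sub>2"
    and "\<forall>x\<in>V\<^sub>1 \<inter> V\<^sub>2. f\<^sub>1 x = f\<^sub>2 x"
  shows "proper_coloring (A \<union> B) (\<lambda>x. if x \<in> V\<^sub>1 then f\<^sub>1 x else f\<^sub>2 x)"
  unfolding proper_coloring_def
proof
  fix e assume "e \<in> A \<union> B"
  then show "\<exists>x\<in>e. \<exists>y\<in>e. (if x \<in> V\<^sub>1 then f\<^sub>1 x else f\<^sub>2 x) \<noteq> (if y \<in> V\<^sub>1 then f\<^sub>1 y else f\<^sub>2 y)"
  proof
    assume "e \<in> A"
    with assms(1,2) show ?thesis by (fastforce simp: proper_coloring_def)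
  next
    assume "e \<in> B"
    with assms(3) obtain x y where "x \<in> e" "y \<in> e" "f\<^sub>2 x \<noteq> f\<^sub>2 y"
      by (auto simp: proper_coloring_def)
    with \<open>e \<in> B\<close> assms(4,5) show ?thesis by (metis IntI subsetD)
  qed
qed

lemma transpose_less:
  fixes a b n :: nat
  shows "a < k \<Longrightarrow> b < k \<Longrightarrow> n < k \<Longrightarrow> transpose a b n < k"
  by (simp add: transpose_def)

lemma colorable_mono: "colorable V E k \<Longrightarrow> k \<le> m \<Longrightarrow> colorable V E m"
  unfolding colorable_def by (meson lessThan_subset_iff order_trans)

lemma card_ge_2_ex_neq: "2 \<le> card A \<Longrightarrow> \<exists>y\<in>A. y \<noteq> v"
  by (metis card_le_Suc0_iff_eq not_less_eq_eq numeral_2_eq_2 card.infinite zero_le)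

lemma hypergraph_colorable_card:
  assumes "hypergraph V E"
  shows "colorable V E (card V)"
proof -
  have "finite V" "E \<subseteq> Pow V" "\<forall>e\<in>E. 2 \<le> card e"
    using assms by (auto simp: hypergraph_def)
  obtain f :: "'a \<Rightarrow> nat" where f: "bij_betw f V {0..<card V}"
    using \<open>finite V\<close> ex_bij_betw_finite_nat by blast
  have "proper_coloring E f"
    unfolding proper_coloring_def
  proof
    fix e assume "e \<in> E"
    then have "2 \<le> card e" using \<open>\<forall>e\<in>E. 2 \<le> card e\<close> by blast
    then obtain x where "x \<in> e" by fastforce
    moreover obtain y where "y \<in> e" "y \<noteq> x"
      using card_ge_2_ex_neq[OF \<open>2 \<le> card e\<close>] by blast
    moreover have "e \<subseteq> V" using \<open>e \<in> E\<close> \<open>E \<subseteq> Pow V\<close> by auto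
    ultimately have "f y \<noteq> f x"
      using inj_on_eq_iff[OF bij_betw_imp_inj_on[OF f]] by blast
    with \<open>x \<in> e\<close> \<open>y \<in> e\<close> show "\<exists>x\<in>e. \<exists>y\<in>e. f x \<noteq> f y" by blast
  qed
  moreover have "f ` V \<subseteq> {..<card V}"
    using bij_betw_imp_surj_on[OF f] by auto
  ultimately show ?thesis
    by (auto simp: colorable_iff_proper_coloring)
qed

lemma colorable_chromatic_number:
  "hypergraph V E \<Longrightarrow> colorable V E (chromatic_number V E)"
  unfolding chromatic_number_def by (rule LeastI) (rule hypergraph_colorable_card)

lemma critical_not_colorable: "critical (k + 1) V E \<Longrightarrow> \<not> colorable V E k"
  unfolding critical_def chromatic_number_def using Least_le[of "colorable V E" k] by auto

lemma critical_proper_subhypergraph_colorable: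
  assumes "critical (k + 1) V E" "proper_subhypergraph V' E' V E"
  shows "colorable V' E' k"
proof -
  have "chromatic_number V' E' \<le> k"
    using assms unfolding critical_def by fastforce
  moreover have "colorable V' E' (chromatic_number V' E')"
    using assms(2) by (simp add: proper_subhypergraph_def colorable_chromatic_number)
  ultimately show ?thesis by (rule colorable_mono[rotated])
qed

lemma critical_delete_edge_colorable:
  assumes "critical (k + 1) V E" "e \<in> E"
  shows "colorable V (E - {e}) k"
proof -
  have "hypergraph V E" using assms(1) by (simp add: critical_def)
  with assms(2) have "proper_subhypergraph V (E - {e}) V E"
    by (auto simp: proper_subhypergraph_def hypergraph_def)
  with assms(1) show ?thesis by (rule critical_proper_subhypergraph_colorable)
qed

lemma proper_subhypergraph_induced:
  assumes "hypergraph V E" "W \<subset> V"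
  shows "proper_subhypergraph W (induced_edges E W) V E"
  using assms finite_subset[of W V]
  by (auto simp: proper_subhypergraph_def hypergraph_def induced_edges_def)

lemma colorable_glue_at_vertex:
  assumes "colorable V\<^sub>1 A k" "\<forall>e\<in>A. e \<subseteq> V\<^sub>1"
    and "colorable V\<^sub>2 B k" "\<forall>e\<in>B. e \<subseteq> V\<^sub>2"
    and "V\<^sub>1 \<inter> V\<^sub>2 = {v}"
  shows "colorable (V\<^sub>1 \<union> V\<^sub>2) (A \<union> B) k"
proof -
  obtain f\<^sub>1 f\<^sub>2 where f\<^sub>1: "f\<^sub>1 ` V\<^sub>1 \<subseteq> {..<k}" "proper_coloring A f\<^sub>1"
    and f\<^sub>2: "f\<^sub>2 ` V\<^sub>2 \<subseteq> {..<k}" "proper_coloring B f\<^sub>2"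
    using assms(1,3) by (auto simp: colorable_iff_proper_coloring)
  define g where "g = transpose (f\<^sub>2 v) (f\<^sub>1 v) \<circ> f\<^sub>2"
  have "v \<in> V\<^sub>1" "v \<in> V\<^sub>2" using assms(5) by auto
  then have "f\<^sub>1 v < k" "f\<^sub>2 v < k" using f\<^sub>1(1) f\<^sub>2(1) by auto
  then have "g ` V\<^sub>2 \<subseteq> {..<k}"
    using f\<^sub>2(1) by (auto simp: g_def intro: transpose_less)
  moreover have "proper_coloring B g"
    unfolding g_def using f\<^sub>2(2) inj_transpose by (rule proper_coloring_comp_inj[rotated])
  moreover have "\<forall>x\<in>V\<^sub>1 \<inter> V\<^sub>2. f\<^sub>1 x = g x"
    using assms(5) by (simp add: g_def)
  ultimately have "proper_coloring (A \<union> B) (\<lambda>x. if x \<in> V\<^sub>1 then f\<^sub>1 x else g x)"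
    "(\<lambda>x. if x \<in> V\<^sub>1 then f\<^sub>1 x else g x) ` (V\<^sub>1 \<union> V\<^sub>2) \<subseteq> {..<k}"
    using proper_coloring_glue[OF f\<^sub>1(2) assms(2) _ assms(4)] f\<^sub>1(1) by auto
  then show ?thesis unfolding colorable_iff_proper_coloring by blast
qed

lemma critical_no_separating_vertex:
  assumes "critical (k + 1) V E"
  shows "\<not> separating_vertex V E v"
proof
  assume "separating_vertex V E v"
  then obtain W\<^sub>1 W\<^sub>2 where W: "W\<^sub>1 \<union> W\<^sub>2 = V" "W\<^sub>1 \<inter> W\<^sub>2 = {v}" "2 \<le> card W\<^sub>1" "2 \<le> card W\<^sub>2"
    and E: "E = induced_edges E W\<^sub>1 \<union> induced_edges E W\<^sub>2"
    unfolding separating_vertex_def by metis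
  have "hypergraph V E" using assms by (simp add: critical_def)
  have "W\<^sub>1 \<subset> V" "W\<^sub>2 \<subset> V"
    using W card_ge_2_ex_neq[of W\<^sub>1 v] card_ge_2_ex_neq[of W\<^sub>2 v] by blast+
  then have col: "colorable W\<^sub>1 (induced_edges E W\<^sub>1) k" "colorable W\<^sub>2 (induced_edges E W\<^sub>2) k"
    by (simp_all add: critical_proper_subhypergraph_colorable[OF assms]
        proper_subhypergraph_induced[OF \<open>hypergraph V E\<close>])
  have "colorable (W\<^sub>1 \<union> W\<^sub>2) (induced_edges E W\<^sub>1 \<union> induced_edges E W\<^sub>2) k"
    by (rule colorable_glue_at_vertex[OF col(1) _ col(2) _ W(2)]) (simp_all add: induced_edges_def)
  with W(1) E critical_not_colorable[OF assms] show False by simp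
qed

lemma critical_edge_crosses_separation:
  assumes "critical (k + 1) V E" "e \<in> E"
    and W: "V = W\<^sub>1 \<union> W\<^sub>2" "W\<^sub>1 \<inter> W\<^sub>2 = {v}" "2 \<le> card W\<^sub>1" "2 \<le> card W\<^sub>2"
    and sep: "E - {e} = induced_edges (E - {e}) W\<^sub>1 \<union> induced_edges (E - {e}) W\<^sub>2"
  shows "\<exists>x\<in>e \<inter> W\<^sub>2. x \<noteq> v"
proof -
  have "\<not> e \<subseteq> W\<^sub>1"
  proof
    assume "e \<subseteq> W\<^sub>1"
    have "d \<subseteq> W\<^sub>1 \<or> d \<subseteq> W\<^sub>2" if "d \<in> E" for d
      using \<open>e \<subseteq> W\<^sub>1\<close> equalityD1[OF sep] \<open>d \<in> E\<close>
      by (cases "d = e") (auto simp: induced_edges_def)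
    then have "separating_vertex V E v"
      using W unfolding separating_vertex_def induced_edges_def by blast
    with critical_no_separating_vertex[OF assms(1)] show False ..
  qed
  moreover have "e \<subseteq> V"
    using assms(1,2) by (auto simp: critical_def hypergraph_def)
  ultimately show ?thesis using W(1,2) by blast
qed

lemma critical_edge_monochromatic:
  assumes "critical (k + 1) V E" "e \<in> E"
    and "c ` V \<subseteq> {..<k}" "proper_coloring (E - {e}) c"
    and "x \<in> e" "y \<in> e"
  shows "c x = c y"
proof (rule ccontr)
  assume "c x \<noteq> c y"
  with assms(4-6) have "proper_coloring E c"
    by (auto simp: proper_coloring_def)
  with assms(3) have "colorable V E k"
    unfolding colorable_iff_proper_coloring by blast
  with critical_not_colorable[OF assms(1)] show False ..
qed

lemma critical_cut_vertex_color:
  assumes "3 \<le> k" "critical (k + 1) V E" "e \<in> E"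
    and W: "V = W\<^sub>1 \<union> W\<^sub>2" "W\<^sub>1 \<inter> W\<^sub>2 = {v}"
    and sep: "E - {e} = induced_edges (E - {e}) W\<^sub>1 \<union> induced_edges (E - {e}) W\<^sub>2"
    and c: "c ` V \<subseteq> {..<k}" "proper_coloring (E - {e}) c"
    and x: "x\<^sub>1 \<in> e \<inter> W\<^sub>1" "x\<^sub>2 \<in> e \<inter> W\<^sub>2" "x\<^sub>2 \<noteq> v"
  shows "c v = c x\<^sub>1"
proof (rule ccontr)
  assume cv: "c v \<noteq> c x\<^sub>1"
  define a where "a = c x\<^sub>1"
  have "\<exists>b::nat. b < 3 \<and> b \<noteq> a \<and> b \<noteq> c v" by presburger
  then obtain b :: nat where b: "b < 3" "b \<noteq> a" "b \<noteq> c v" by blast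
  have "a < k" using c(1) x W(1) by (auto simp: a_def)
  have "b < k" using b(1) assms(1) by simp
  define g where "g = transpose a b \<circ> c"
  define f where "f = (\<lambda>x. if x \<in> W\<^sub>1 then c x else g x)"
  have "proper_coloring (E - {e}) f"
    unfolding f_def
  proof (subst sep, rule proper_coloring_glue)
    have "proper_coloring (E - {e}) g"
      unfolding g_def using inj_transpose c(2) by (rule proper_coloring_comp_inj)
    then show "proper_coloring (induced_edges (E - {e}) W\<^sub>1) c"
      "proper_coloring (induced_edges (E - {e}) W\<^sub>2) g"
      using c(2) by (simp_all add: proper_coloring_def induced_edges_def)
    show "\<forall>x\<in>W\<^sub>1 \<inter> W\<^sub>2. c x = g x"
      using W(2) cv b by (simp add: g_def a_def)
  qed (simp_all add: induced_edges_def)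
  moreover have "f x\<^sub>1 \<noteq> f x\<^sub>2"
  proof -
    have "x\<^sub>2 \<notin> W\<^sub>1" using x W(2) by blast
    moreover have "c x\<^sub>2 = a"
      using critical_edge_monochromatic[OF assms(2,3) c IntD1[OF x(2)] IntD1[OF x(1)]] by (simp add: a_def)
    ultimately show ?thesis using x(1) b(2) by (simp add: f_def g_def a_def)
  qed
  ultimately have "proper_coloring (insert e (E - {e})) f"
    using x(1,2) unfolding proper_coloring_def by blast
  then have "proper_coloring E f"
    using assms(3) by (simp add: insert_absorb)
  moreover have "f ` V \<subseteq> {..<k}"
    using c(1) \<open>a < k\<close> \<open>b < k\<close> by (auto simp: f_def g_def intro: transpose_less)
  ultimately have "colorable V E k"
    unfolding colorable_iff_proper_coloring by blast
  with critical_not_colorable[OF assms(2)] show False ..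
qed

lemma hajos_join_of_split_edge:
  assumes "hypergraph V E" "e \<in> E"
    and W: "V = W\<^sub>1 \<union> W\<^sub>2" "W\<^sub>1 \<inter> W\<^sub>2 = {v}"
    and sep: "E - {e} = induced_edges (E - {e}) W\<^sub>1 \<union> induced_edges (E - {e}) W\<^sub>2"
    and x: "x\<^sub>1 \<in> e \<inter> W\<^sub>1" "x\<^sub>1 \<noteq> v" "x\<^sub>2 \<in> e \<inter> W\<^sub>2" "x\<^sub>2 \<noteq> v"
    and new: "insert v (e \<inter> W\<^sub>1) \<notin> E - {e}" "insert v (e \<inter> W\<^sub>2) \<notin> E - {e}"
  shows "hajos_join_of
    W\<^sub>1 (induced_edges (E - {e}) W\<^sub>1 \<union> {insert v (e \<inter> W\<^sub>1)})
    W\<^sub>2 (induced_edges (E - {e}) W\<^sub>2 \<union> {insert v (e \<inter> W\<^sub>2)}) V E"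
proof -
  have "finite V" "e \<subseteq> V" "\<forall>d\<in>E. 2 \<le> card d"
    using assms(1,2) by (auto simp: hypergraph_def)
  have side: "hypergraph W (induced_edges (E - {e}) W \<union> {insert v (e \<inter> W)})"
    if "W \<subseteq> V" "v \<in> W" "x \<in> e \<inter> W" "x \<noteq> v" for W x
  proof -
    have "finite (insert v (e \<inter> W))"
      using \<open>finite V\<close> \<open>e \<subseteq> V\<close> finite_subset by blast
    then have "card {v, x} \<le> card (insert v (e \<inter> W))"
      using that(3) by (intro card_mono) auto
    with that(4) have "2 \<le> card (insert v (e \<inter> W))" by simp
    moreover have "finite W" using \<open>finite V\<close> that(1) finite_subset by blast
    ultimately show ?thesis
      using that(2) \<open>\<forall>d\<in>E. 2 \<le> card d\<close> by (auto simp: hypergraph_def induced_edges_def)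
  qed
  have estar: "e = (insert v (e \<inter> W\<^sub>1) \<union> insert v (e \<inter> W\<^sub>2)) - {v} \<or>
      e = insert v (e \<inter> W\<^sub>1) \<union> insert v (e \<inter> W\<^sub>2)"
    using \<open>e \<subseteq> V\<close> W by blast
  have restore: "induced_edges (E - {e}) W \<union> {insert v (e \<inter> W)} - {insert v (e \<inter> W)}
      = induced_edges (E - {e}) W" if "insert v (e \<inter> W) \<notin> E - {e}" for W
    using that by (auto simp: induced_edges_def)
  have "E = insert e (induced_edges (E - {e}) W\<^sub>1 \<union> induced_edges (E - {e}) W\<^sub>2)"
    by (simp only: sep[symmetric] insert_Diff[OF assms(2)])
  then have "E = (induced_edges (E - {e}) W\<^sub>1 \<union> {insert v (e \<inter> W\<^sub>1)} - {insert v (e \<inter> W\<^sub>1)})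
      \<union> (induced_edges (E - {e}) W\<^sub>2 \<union> {insert v (e \<inter> W\<^sub>2)} - {insert v (e \<inter> W\<^sub>2)}) \<union> {e}"
    unfolding restore[OF new(1)] restore[OF new(2)] by blast
  moreover have "hypergraph W\<^sub>1 (induced_edges (E - {e}) W\<^sub>1 \<union> {insert v (e \<inter> W\<^sub>1)})"
    "hypergraph W\<^sub>2 (induced_edges (E - {e}) W\<^sub>2 \<union> {insert v (e \<inter> W\<^sub>2)})"
    using side[of W\<^sub>1 x\<^sub>1] side[of W\<^sub>2 x\<^sub>2] x W by blast+
  ultimately show ?thesis
    unfolding hajos_join_of_def using W(1,2) estar by blast
qed

theorem theorem10:
  fixes V :: "'a set" and E :: "'a set set" and k :: nat
  assumes "k \<ge> 3"
    and "critical (k + 1) V E"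
    and "v \<in> V" and "e \<in> E"
    and "separating_vertex V (E - {e}) v"
  shows "is_hajos_join V E"
proof -
  obtain W\<^sub>1 W\<^sub>2 where W: "V = W\<^sub>1 \<union> W\<^sub>2" "W\<^sub>1 \<inter> W\<^sub>2 = {v}" "2 \<le> card W\<^sub>1" "2 \<le> card W\<^sub>2"
    and sep: "E - {e} = induced_edges (E - {e}) W\<^sub>1 \<union> induced_edges (E - {e}) W\<^sub>2"
    using assms(5) unfolding separating_vertex_def by metis
  have W': "V = W\<^sub>2 \<union> W\<^sub>1" "W\<^sub>2 \<inter> W\<^sub>1 = {v}"
    and sep': "E - {e} = induced_edges (E - {e}) W\<^sub>2 \<union> induced_edges (E - {e}) W\<^sub>1"
    using W sep by (metis Un_commute Int_commute)+
  obtain x\<^sub>1 x\<^sub>2 where x: "x\<^sub>1 \<in> e \<inter> W\<^sub>1" "x\<^sub>1 \<noteq> v" "x\<^sub>2 \<in> e \<inter> W\<^sub>2" "x\<^sub>2 \<noteq> v"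
    using critical_edge_crosses_separation[OF assms(2,4) W sep]
      critical_edge_crosses_separation[OF assms(2,4) W' W(4,3) sep'] by blast
  obtain c where c: "c ` V \<subseteq> {..<k}" "proper_coloring (E - {e}) c"
    using critical_delete_edge_colorable[OF assms(2,4)]
    unfolding colorable_iff_proper_coloring by blast
  have "c v = c x\<^sub>1"
    using critical_cut_vertex_color[OF assms(1,2,4) W(1,2) sep c x(1,3,4)] .
  moreover have "c y = c x\<^sub>1" if "y \<in> e" for y
    using critical_edge_monochromatic[OF assms(2,4) c that] x(1) by blast
  ultimately have "insert v (e \<inter> W) \<notin> E - {e}" for W
    using proper_coloring_not_monochromatic[OF c(2), of "insert v (e \<inter> W)" "c x\<^sub>1"] by blast
  moreover have "hypergraph V E" using assms(2) by (simp add: critical_def)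
  ultimately show ?thesis
    using hajos_join_of_split_edge[OF _ assms(4) W(1,2) sep x] unfolding is_hajos_join_def by blast
qed

end
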